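(* Let $p$ be a prime, $q=p^r$, $m,n\ge1$, and $0\le l\le r-1$. Let $\mathscr{C}\subseteq\mathrm{GF}(q^m)^n$ be a scalable code. Then $\mathrm{Tr}(\mathscr{C})$ is self-orthogonal w.r.t. the Hermitian-type product $h_l(x,y)=\sum_{i=1}^n x_iy_i^{p^l}$ on $\mathrm{GF}(q)^n$ if and only if $$\sum_{i=1}^n x_iy_i^{p^lq^k}=0$$ for all $x=(x_1,\ldots,x_n),y=(y_1,\ldots,y_n)\in\mathscr{C}$ and all $0\le k\le m-1$; i.e., if and only if $\mathscr{C}$ is self-orthogonal w.r.t. each of the forms $f_{kl}(x,y)=\sum_{i=1}^n x_iy_i^{p^lq^k}$, $0\le k\le m-1$.
   Context: $\mathrm{Tr}:\mathrm{GF}(q^m)\to\mathrm{GF}(q)$, $\mathrm{Tr}(a)=\sum_{i=0}^{m-1}a^{q^i}$. A code $\mathscr{C}\subseteq\mathrm{GF}(q^m)^n$ is scalable if $x\in\mathscr{C}\Rightarrow\alpha x\in\mathscr{C}$ for all $\alpha\in\mathrm{GF}(q^m)$. $\mathrm{Tr}(\mathscr{C})=\{(\mathrm{Tr}(x_1),\ldots,\mathrm{Tr}(x_n)):x\in\mathscr{C}\}$. A code $D$ is self-orthogonal w.r.t. a form $g$ if $g(x,y)=0$ for all $x,y\in D$. *)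

theory Defs
  imports "HOL-Computational_Algebra.Primes"
begin

text \<open>The field GF(q^m) is modelled as a finite field type 'a with CARD('a) = q^m;
  GF(q) is its subfield of elements fixed by the q-th power map.
  Vectors of length n are functions from a finite index type 'n (n = CARD('n)).\<close>

definition trace :: "nat \<Rightarrow> nat \<Rightarrow> 'a::field \<Rightarrow> 'a" where
  "trace q m a = (\<Sum>i<m. a ^ (q ^ i))"

definition scalable :: "('n \<Rightarrow> 'a::field) set \<Rightarrow> bool" where
  "scalable C \<longleftrightarrow> (\<forall>x\<in>C. \<forall>\<alpha>::'a. (\<lambda>i. \<alpha> * x i) \<in> C)"

definition trace_code :: "nat \<Rightarrow> nat \<Rightarrow> ('n \<Rightarrow> 'a::field) set \<Rightarrow> ('n \<Rightarrow> 'a) set" where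
  "trace_code q m C = (\<lambda>x. \<lambda>i. trace q m (x i)) ` C"

definition self_orthogonal :: "(('n \<Rightarrow> 'a) \<Rightarrow> ('n \<Rightarrow> 'a) \<Rightarrow> 'b::zero) \<Rightarrow> ('n \<Rightarrow> 'a) set \<Rightarrow> bool" where
  "self_orthogonal g D \<longleftrightarrow> (\<forall>x\<in>D. \<forall>y\<in>D. g x y = 0)"

definition herm_form :: "nat \<Rightarrow> nat \<Rightarrow> ('n::finite \<Rightarrow> 'a::field) \<Rightarrow> ('n \<Rightarrow> 'a) \<Rightarrow> 'a" where
  "herm_form p l x y = (\<Sum>i\<in>UNIV. x i * y i ^ (p ^ l))"

definition f_form :: "nat \<Rightarrow> nat \<Rightarrow> nat \<Rightarrow> nat \<Rightarrow> ('n::finite \<Rightarrow> 'a::field) \<Rightarrow> ('n \<Rightarrow> 'a) \<Rightarrow> 'a" where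
  "f_form p q k l x y = (\<Sum>i\<in>UNIV. x i * y i ^ (p ^ l * q ^ k))"

end

theory Submission
  imports Defs "HOL-Number_Theory.Residues" "HOL-Computational_Algebra.Polynomial"
begin

text \<open>Since \<open>Tr (y\<^sub>i)\<close> lies in \<open>GF(q)\<close> and \<open>Tr\<close> is \<open>GF(q)\<close>-linear and commutes with the Frobenius,
  \<open>h\<^sub>l(Tr x, Tr y) = Tr (\<Sum>\<^sub>k f\<^sub>k\<^sub>l(x, y))\<close>. Replacing \<open>x, y\<close> by \<open>\<alpha>x, \<beta>y\<close> multiplies \<open>f\<^sub>k\<^sub>l(x, y)\<close> by
  \<open>\<alpha> \<beta>^(p^l q^k)\<close>. As the trace form is nondegenerate, the vanishing of \<open>h\<^sub>l\<close> on the scaled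
  vectors for all \<open>\<alpha>\<close> forces \<open>\<Sum>\<^sub>k f\<^sub>k\<^sub>l(x, y) \<beta>^(p^l q^k) = 0\<close> for every \<open>\<beta>\<close>. This is a polynomial
  in \<open>\<beta>\<close> with distinct exponents below \<open>q^m\<close> vanishing on all of \<open>GF(q^m)\<close>, so each
  \<open>f\<^sub>k\<^sub>l(x, y)\<close> is zero.\<close>

lemma prime_CHAR_finite_field: "prime CHAR('a::{field,finite})"
  by (simp add: finite_imp_CHAR_pos prime_CHAR_semidom)

lemma CHAR_eq_if_card_eq_prime_power:
  assumes "prime p" and "card (UNIV :: 'a::{field,finite} set) = p ^ N" and "N \<ge> 1"
  shows "CHAR('a) = p"
proof -
  have "CHAR('a) dvd p ^ N"
    using CHAR_dvd_CARD[where 'a='a] assms(2) by simp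
  hence "CHAR('a) dvd p"
    using prime_CHAR_finite_field[where 'a='a] prime_dvd_power by blast
  thus ?thesis
    using prime_CHAR_finite_field[where 'a='a] assms(1) by (simp add: primes_dvd_imp_eq)
qed

text \<open>The library's \<open>finite_field_power_card_eq_same\<close> is stated for the class \<open>finite_field\<close>,
  which \<open>{field,finite}\<close> does not syntactically belong to.\<close>

lemma power_card_eq_same:
  fixes a :: "'a::{field,finite}"
  shows "a ^ card (UNIV :: 'a set) = a"
proof (cases "a = 0")
  case False
  let ?U = "UNIV - {0::'a}"
  have "(\<Prod>x\<in>?U. a * x) = (\<Prod>x\<in>?U. x)"
    by (rule prod.reindex_bij_witness[of _ "\<lambda>x. x / a" "\<lambda>x. a * x"]) (use False in auto)
  hence "a ^ card ?U * (\<Prod>x\<in>?U. x) = 1 * (\<Prod>x\<in>?U. x)"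
    by (simp add: prod.distrib)
  hence "a ^ card ?U = 1"
    by (rule mult_right_cancel[THEN iffD1, rotated]) simp
  moreover have "card (UNIV :: 'a set) = Suc (card ?U)"
    using finite_UNIV_card_ge_0[where 'a='a] by (simp add: card_Diff_singleton)
  ultimately show ?thesis
    by (metis power_Suc mult_1_right)
qed (simp add: finite_UNIV_card_ge_0)

lemma sum_power_CHAR_power:
  fixes f :: "'b \<Rightarrow> 'a::{field,finite}"
  assumes "q = CHAR('a) ^ r"
  shows "(\<Sum>i\<in>A. f i) ^ (q ^ k) = (\<Sum>i\<in>A. f i ^ (q ^ k))"
  using freshmans_dream_sum'[OF prime_CHAR_finite_field[where 'a='a], of "q ^ k" "r * k"] assms
  by (simp add: power_mult)

lemma sum_monomials_eq_0_imp_coeff_eq_0: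
  fixes c :: "'b \<Rightarrow> 'a::{field,finite}"
  assumes "finite K" and "inj_on e K" and "\<And>k. k \<in> K \<Longrightarrow> e k < card (UNIV :: 'a set)"
    and "\<And>\<beta>. (\<Sum>k\<in>K. c k * \<beta> ^ e k) = 0" and "j \<in> K"
  shows "c j = 0"
proof (rule ccontr)
  assume "c j \<noteq> 0"
  define P where "P = (\<Sum>k\<in>K. monom (c k) (e k))"
  have "coeff P (e j) = (\<Sum>k\<in>K. if e k = e j then c k else 0)"
    by (simp add: P_def coeff_sum)
  also have "\<dots> = c j"
    using assms(1,2,5) by (simp add: inj_on_eq_iff sum.delta[of K j c] cong: if_cong)
  finally have "P \<noteq> 0"
    using \<open>c j \<noteq> 0\<close> by auto
  hence "card {\<beta>. poly P \<beta> = 0} \<le> degree P"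
    by (rule card_poly_roots_bound)
  moreover have "{\<beta>. poly P \<beta> = 0} = UNIV"
    using assms(4) by (simp add: P_def poly_sum poly_monom)
  moreover have "degree P < card (UNIV :: 'a set)"
  proof -
    have "degree P \<le> Max (e ` K)"
      unfolding P_def using assms(1)
      by (intro degree_sum_le) (auto intro: order.trans[OF degree_monom_le])
    also have "\<dots> < card (UNIV :: 'a set)"
      using assms(1,3,5) by (subst Max_less_iff) auto
    finally show ?thesis .
  qed
  ultimately show False
    by simp
qed

lemma trace_sum:
  fixes f :: "'b \<Rightarrow> 'a::{field,finite}"
  assumes "q = CHAR('a) ^ r"
  shows "trace q m (\<Sum>i\<in>A. f i) = (\<Sum>i\<in>A. trace q m (f i))"
  unfolding trace_def by (simp add: sum_power_CHAR_power[OF assms] sum.swap[of _ "{..<m}"])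

lemma trace_zero:
  assumes "q > 0"
  shows "trace q m (0::'a::field) = 0"
  using assms by (simp add: trace_def zero_power)

lemma trace_mult_fixed:
  fixes d a :: "'a::field"
  assumes "d ^ q = d"
  shows "trace q m (d * a) = d * trace q m a"
proof -
  have "d ^ (q ^ i) = d" for i
    by (induction i) (simp_all add: power_mult assms)
  thus ?thesis
    unfolding trace_def by (simp add: power_mult_distrib sum_distrib_left)
qed

lemma trace_power_q:
  fixes a :: "'a::{field,finite}"
  assumes "q = CHAR('a) ^ r" and "card (UNIV :: 'a set) = q ^ m" and "m \<ge> 1"
  shows "trace q m a ^ q = trace q m a"
proof -
  obtain m' where m': "m = Suc m'"
    using assms(3) by (cases m) auto
  have "trace q m a ^ q = (\<Sum>i<m. (a ^ (q ^ i)) ^ q)"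
    using sum_power_CHAR_power[OF assms(1), of _ _ 1] by (simp add: trace_def)
  also have "\<dots> = (\<Sum>i<m. a ^ (q ^ Suc i))"
    by (simp add: mult.commute flip: power_mult)
  also have "\<dots> = (\<Sum>i<m'. a ^ (q ^ Suc i)) + a ^ (q ^ m)"
    by (simp add: m')
  also have "a ^ (q ^ m) = a ^ (q ^ 0)"
    using power_card_eq_same[of a] assms(2) by simp
  also have "(\<Sum>i<m'. a ^ (q ^ Suc i)) + a ^ (q ^ 0) = trace q m a"
    unfolding trace_def m' sum.lessThan_Suc_shift by (simp only: add.commute)
  finally show ?thesis .
qed

lemma trace_nondegenerate:
  fixes s :: "'a::{field,finite}"
  assumes "card (UNIV :: 'a set) = q ^ m" and "q > 1" and "m \<ge> 1"
    and "\<And>\<alpha>. trace q m (\<alpha> * s) = 0"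
  shows "s = 0"
proof (rule ccontr)
  assume "s \<noteq> 0"
  have "trace q m z = 0" for z :: 'a
    using assms(4)[of "z / s"] \<open>s \<noteq> 0\<close> by simp
  hence vanish: "(\<Sum>k\<in>{..<m}. 1 * \<beta> ^ (q ^ k)) = 0" for \<beta> :: 'a
    by (simp add: trace_def)
  have "(1::'a) = 0"
  proof (rule sum_monomials_eq_0_imp_coeff_eq_0[of "{..<m}" "\<lambda>k. q ^ k" "\<lambda>_. 1" 0])
    show "inj_on (\<lambda>k. q ^ k) {..<m}"
      using assms(2) by (simp add: inj_on_def power_inject_exp)
    show "q ^ k < card (UNIV :: 'a set)" if "k \<in> {..<m}" for k
      using assms(1,2) that by (simp add: power_strict_increasing_iff)
  qed (use vanish assms(3) in auto)
  thus False
    by simp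
qed

lemma f_form_scale:
  "f_form p q k l (\<lambda>i. \<alpha> * x i) (\<lambda>i. \<beta> * y i) = \<alpha> * \<beta> ^ (p ^ l * q ^ k) * f_form p q k l x y"
  by (simp add: f_form_def power_mult_distrib sum_distrib_left mult_ac)

lemma herm_form_trace:
  fixes x y :: "'n::finite \<Rightarrow> 'a::{field,finite}"
  assumes "q = CHAR('a) ^ r" and "card (UNIV :: 'a set) = q ^ m" and "m \<ge> 1"
  shows "herm_form CHAR('a) l (\<lambda>i. trace q m (x i)) (\<lambda>i. trace q m (y i)) =
         trace q m (\<Sum>k<m. f_form CHAR('a) q k l x y)"
proof -
  let ?p = "CHAR('a)"
  have fixed: "(trace q m (y i) ^ ?p ^ l) ^ q = trace q m (y i) ^ ?p ^ l" for i
    using trace_power_q[OF assms] by (metis power_mult mult.commute)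
  have frob: "trace q m (y i) ^ ?p ^ l = (\<Sum>k<m. y i ^ (?p ^ l * q ^ k))" for i
    unfolding trace_def sum_power_CHAR_power[where 'a='a and q="?p" and r=1 and k=l, simplified]
    by (simp add: mult.commute flip: power_mult)
  have "herm_form ?p l (\<lambda>i. trace q m (x i)) (\<lambda>i. trace q m (y i)) =
        (\<Sum>i\<in>UNIV. trace q m (y i) ^ ?p ^ l * trace q m (x i))"
    by (simp add: herm_form_def mult.commute)
  also have "\<dots> = (\<Sum>i\<in>UNIV. trace q m (trace q m (y i) ^ ?p ^ l * x i))"
    by (simp only: trace_mult_fixed[OF fixed])
  also have "\<dots> = trace q m (\<Sum>i\<in>UNIV. x i * (\<Sum>k<m. y i ^ (?p ^ l * q ^ k)))"
    by (simp add: trace_sum[OF assms(1)] frob mult.commute)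
  also have "(\<Sum>i\<in>UNIV. x i * (\<Sum>k<m. y i ^ (?p ^ l * q ^ k))) = (\<Sum>k<m. f_form ?p q k l x y)"
    unfolding f_form_def sum_distrib_left by (rule sum.swap)
  finally show ?thesis .
qed

lemma f_form_eq_0_if_herm_form_trace_eq_0:
  fixes x y :: "'n::finite \<Rightarrow> 'a::{field,finite}"
  assumes "q = CHAR('a) ^ r" and "l < r" and "card (UNIV :: 'a set) = q ^ m" and "m \<ge> 1"
    and "\<And>\<alpha> \<beta>. herm_form CHAR('a) l (\<lambda>i. trace q m (\<alpha> * x i)) (\<lambda>i. trace q m (\<beta> * y i)) = 0"
    and "k < m"
  shows "f_form CHAR('a) q k l x y = 0"
proof -
  let ?p = "CHAR('a)" and ?e = "\<lambda>k. CHAR('a) ^ l * q ^ k"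
  have p: "?p > 1"
    using prime_CHAR_finite_field prime_gt_1_nat by blast
  have pl_q: "?p ^ l < q"
    using assms(1,2) p by (simp add: power_strict_increasing)
  have q: "q > 1"
    using pl_q p by (meson le_less_trans less_imp_le one_le_power)
  have vanish: "(\<Sum>k<m. f_form ?p q k l x y * \<beta> ^ ?e k) = 0" for \<beta>
  proof (rule trace_nondegenerate[OF assms(3) q assms(4)])
    fix \<alpha>
    show "trace q m (\<alpha> * (\<Sum>k<m. f_form ?p q k l x y * \<beta> ^ ?e k)) = 0"
      using herm_form_trace[OF assms(1,3,4), of l "\<lambda>i. \<alpha> * x i" "\<lambda>i. \<beta> * y i"] assms(5)
      by (simp add: f_form_scale sum_distrib_left mult_ac)
  qed
  have bound: "?e j < card (UNIV :: 'a set)" if "j \<in> {..<m}" for j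
  proof -
    have "?e j < q * q ^ j"
      using pl_q by simp
    also have "\<dots> \<le> q ^ m"
      using that q by (simp add: power_increasing Suc_leI flip: power_Suc)
    finally show ?thesis
      using assms(3) by simp
  qed
  have inj: "inj_on ?e {..<m}"
    using q p by (auto simp: inj_on_def power_inject_exp)
  show ?thesis
    using sum_monomials_eq_0_imp_coeff_eq_0[OF finite_lessThan inj bound vanish] assms(6) by simp
qed

theorem theorem7:
  fixes C :: "('n::finite \<Rightarrow> 'a::{field,finite}) set"
    and p r q m l :: nat
  assumes "prime p" and "q = p ^ r" and "m \<ge> 1" and "l \<le> r - 1" and "r \<ge> 1"
    and "card (UNIV :: 'a set) = q ^ m"
    and "scalable C"
  shows "self_orthogonal (herm_form p l) (trace_code q m C) \<longleftrightarrow>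
         (\<forall>k<m. self_orthogonal (f_form p q k l) C)"
proof -
  have p: "p = CHAR('a)"
    using assms(1-3,5,6) by (intro CHAR_eq_if_card_eq_prime_power[symmetric, of _ "r * m"])
      (simp_all add: power_mult)
  have q: "q = CHAR('a) ^ r" and l: "l < r"
    using assms(2,4,5) p by auto
  show ?thesis
  proof
    assume "self_orthogonal (herm_form p l) (trace_code q m C)"
    moreover have "(\<lambda>i. trace q m (\<alpha> * x i)) \<in> trace_code q m C" if "x \<in> C" for \<alpha> x
      using assms(7) that unfolding scalable_def trace_code_def by (auto intro!: image_eqI)
    ultimately show "\<forall>k<m. self_orthogonal (f_form p q k l) C"
      unfolding self_orthogonal_def p
      by (metis f_form_eq_0_if_herm_form_trace_eq_0[OF q l assms(6,3)])
  next
    assume "\<forall>k<m. self_orthogonal (f_form p q k l) C"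
    hence "(\<Sum>k<m. f_form p q k l x y) = 0" if "x \<in> C" "y \<in> C" for x y
      using that by (simp add: self_orthogonal_def)
    moreover have "q > 0"
      using assms(1,2) by (simp add: prime_gt_0_nat)
    ultimately show "self_orthogonal (herm_form p l) (trace_code q m C)"
      unfolding self_orthogonal_def trace_code_def p
      using herm_form_trace[where 'n='n, OF q assms(6,3)] trace_zero[where 'a='a] by auto
  qed
qed

end
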